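(* Let $\mathcal{A}$ be a parity automaton with costs and let $(\rho_j^1)_{j\in\mathbb{N}}$ and $(\rho_j^2)_{j\in\mathbb{N}}$ be sequences of non-empty finite runs of $\mathcal{A}$ such that $\rho_j^1$ and $\rho_j^2$ have the same type for every $j$, and such that $\sup_j|\rho_j^1|<\infty$ and $\sup_j|\rho_j^2|<\infty$ (where $|\rho|$ is the number of transitions of $\rho$). Then $\rho_0^1\rho_1^1\rho_2^1\cdots$ is an accepting run if, and only if, $\rho_0^2\rho_1^2\rho_2^2\cdots$ is an accepting run.
   Context: A parity automaton with costs is a tuple $\mathcal{A}=(Q,\Sigma,q_I,\delta,\Omega,\mathrm{Cst})$ with a finite set $Q$ of states, a finite alphabet $\Sigma$, an initial state $q_I\in Q$, a deterministic complete transition function $\delta\colon Q\times\Sigma\to Q$ (also viewed as the set of transitions $(q,a,\delta(q,a))$), a coloring $\Omega\colon Q\to\mathbb{N}$, and a cost function $\mathrm{Cst}$ assigning to every transition either $\epsilon$ or $\mathtt{i}$ (the latter are called increment-transitions). Throughout, $\Omega(Q)$ contains both an even and an odd color. A run from $q_0$ on $a_0a_1\cdots$ is the sequence of transitions $(q_0,a_0,q_1)(q_1,a_1,q_2)\cdots$ with $q_{j+1}=\delta(q_j,a_j)$; the cost of a finite run is its number of increment-transitions. For odd $c$, let $\mathrm{Ans}(c)=\{c'\in\Omega(Q)\mid c'>c,\ c'\text{ even}\}$. For an infinite run $\rho=(q_0,a_0,q_1)(q_1,a_1,q_2)\cdots$ and $n\in\mathbb{N}$, $\mathrm{Cor}(\rho,n)=0$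 if $\Omega(q_n)$ is even, and otherwise $\mathrm{Cor}(\rho,n)$ is the minimum of the costs of $(q_n,a_n,q_{n+1})\cdots(q_{n'-1},a_{n'-1},q_{n'})$ over all $n'>n$ with $\Omega(q_{n'})\in\mathrm{Ans}(\Omega(q_n))$, with $\min\emptyset=\infty$. An infinite run $\rho$ is accepting if $\limsup_{n\to\infty}\mathrm{Cor}(\rho,n)<\infty$. The type of a non-empty finite run $(q_0,a_0,q_1)\cdots(q_{n-1},a_{n-1},q_n)$ is $(q_0,q_n,c_0,c_1,\ell)$ where (with $\max\emptyset=\bot$) $c_0=\max\{\Omega(q_j)\mid 0\le j\le n,\ \Omega(q_j)\text{ even}\}$, $c_1=\max\{\Omega(q_j)\mid 0\le j\le n,\ \Omega(q_j)\text{ odd},\ \Omega(q_{j'})\notin\mathrm{Ans}(\Omega(q_j))\text{ for all }j<j'\le n\}$, and $\ell=\mathtt{i}$ iff the run contains an increment-transition, $\ell=\epsilon$ otherwise. *)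

theory Defs
  imports Main "HOL-Library.Extended_Nat" "HOL-Library.Liminf_Limsup"
begin

(* A parity automaton with costs over a finite state type 'q and finite alphabet 'a
   is given by delta :: 'q => 'a => 'q (deterministic, complete), a colouring
   Omega :: 'q => nat and a cost function Cst :: 'q => 'a => bool, where
   Cst q a = True means the transition (q, a, delta q a) is an increment-transition
   and False means it is an epsilon-transition.  The initial state plays no role here. *)

type_synonym ('q,'a) trans = "'q \<times> 'a \<times> 'q"

definition src :: "('q,'a) trans \<Rightarrow> 'q" where "src t = fst t"
definition lbl :: "('q,'a) trans \<Rightarrow> 'a" where "lbl t = fst (snd t)"
definition tgt :: "('q,'a) trans \<Rightarrow> 'q" where "tgt t = snd (snd t)"

definition is_trans :: "('q \<Rightarrow> 'a \<Rightarrow> 'q) \<Rightarrow> ('q,'a) trans \<Rightarrow> bool" where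
  "is_trans \<delta> t \<longleftrightarrow> tgt t = \<delta> (src t) (lbl t)"

definition is_incr :: "('q \<Rightarrow> 'a \<Rightarrow> bool) \<Rightarrow> ('q,'a) trans \<Rightarrow> bool" where
  "is_incr Cst t \<longleftrightarrow> Cst (src t) (lbl t)"

definition fin_run :: "('q \<Rightarrow> 'a \<Rightarrow> 'q) \<Rightarrow> ('q,'a) trans list \<Rightarrow> bool" where
  "fin_run \<delta> \<rho> \<longleftrightarrow> \<rho> \<noteq> [] \<and> (\<forall>t\<in>set \<rho>. is_trans \<delta> t)
     \<and> (\<forall>i. Suc i < length \<rho> \<longrightarrow> tgt (\<rho> ! i) = src (\<rho> ! Suc i))"

definition inf_run :: "('q \<Rightarrow> 'a \<Rightarrow> 'q) \<Rightarrow> (nat \<Rightarrow> ('q,'a) trans) \<Rightarrow> bool" where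
  "inf_run \<delta> r \<longleftrightarrow> (\<forall>n. is_trans \<delta> (r n) \<and> tgt (r n) = src (r (Suc n)))"

definition Ans :: "('q \<Rightarrow> nat) \<Rightarrow> nat \<Rightarrow> nat set" where
  "Ans \<Omega> c = {c' \<in> range \<Omega>. c' > c \<and> even c'}"

definition cost_inf :: "('q \<Rightarrow> 'a \<Rightarrow> bool) \<Rightarrow> (nat \<Rightarrow> ('q,'a) trans) \<Rightarrow> nat \<Rightarrow> nat \<Rightarrow> nat" where
  "cost_inf Cst r n n' = card {j. n \<le> j \<and> j < n' \<and> is_incr Cst (r j)}"

definition Cor :: "('q \<Rightarrow> nat) \<Rightarrow> ('q \<Rightarrow> 'a \<Rightarrow> bool) \<Rightarrow> (nat \<Rightarrow> ('q,'a) trans) \<Rightarrow> nat \<Rightarrow> enat" where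
  "Cor \<Omega> Cst r n = (if even (\<Omega> (src (r n))) then 0
     else (INF n' \<in> {n'. n' > n \<and> \<Omega> (src (r n')) \<in> Ans \<Omega> (\<Omega> (src (r n)))}.
             enat (cost_inf Cst r n n')))"

definition accepting_run :: "('q \<Rightarrow> 'a \<Rightarrow> 'q) \<Rightarrow> ('q \<Rightarrow> nat) \<Rightarrow> ('q \<Rightarrow> 'a \<Rightarrow> bool)
    \<Rightarrow> (nat \<Rightarrow> ('q,'a) trans) \<Rightarrow> bool" where
  "accepting_run \<delta> \<Omega> Cst r \<longleftrightarrow> inf_run \<delta> r \<and> limsup (\<lambda>n. Cor \<Omega> Cst r n) < \<infinity>"

definition fstates :: "('q,'a) trans list \<Rightarrow> 'q list" where
  "fstates \<rho> = map src \<rho> @ [tgt (last \<rho>)]"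

(* max with max {} = bottom, represented by None *)
definition max_opt :: "nat set \<Rightarrow> nat option" where
  "max_opt S = (if S = {} then None else Some (Max S))"

definition run_type :: "('q \<Rightarrow> nat) \<Rightarrow> ('q \<Rightarrow> 'a \<Rightarrow> bool) \<Rightarrow> ('q,'a) trans list
    \<Rightarrow> 'q \<times> 'q \<times> nat option \<times> nat option \<times> bool" where
  "run_type \<Omega> Cst \<rho> =
    (let qs = fstates \<rho>; n = length \<rho> in
     (src (hd \<rho>), tgt (last \<rho>),
      max_opt {\<Omega> (qs ! j) | j. j \<le> n \<and> even (\<Omega> (qs ! j))},
      max_opt {\<Omega> (qs ! j) | j. j \<le> n \<and> odd (\<Omega> (qs ! j))
                 \<and> (\<forall>j'. j < j' \<and> j' \<le> n \<longrightarrow> \<Omega> (qs ! j') \<notin> Ans \<Omega> (\<Omega> (qs ! j)))},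
      (\<exists>t\<in>set \<rho>. is_incr Cst t)))"
(* last component: True = letter i (contains an increment-transition), False = epsilon *)

(* infinite concatenation rho_0 rho_1 rho_2 ... of a sequence of non-empty lists *)
definition offs :: "(nat \<Rightarrow> 'x list) \<Rightarrow> nat \<Rightarrow> nat" where
  "offs R k = (\<Sum>i<k. length (R i))"

definition concat_inf :: "(nat \<Rightarrow> 'x list) \<Rightarrow> nat \<Rightarrow> 'x" where
  "concat_inf R n = (let k = (GREATEST k. offs R k \<le> n) in R k ! (n - offs R k))"

end

theory Submission
  imports Defs
begin

text \<open>
  Between blocks, the concatenation is a run iff last and first states match, and these are part of
  the type.  For acceptance, suppose every odd colour of the first run beyond some point is
  answered at cost at most K, and let an odd colour c occur in block j of the second run.  Either
  c is answered within the block, at cost at most the block length bound B, or the type of block j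
  records an odd colour c1 \<ge> c that is still unanswered at the end of block j of the first run.
  There, c1 is answered at cost at most K by an even colour e in a later block j'; the type records
  an even colour \<ge> e in block j' of the second run, which answers c.  On each block strictly
  between j and j' the second run spends at most B increments, and only where the first run
  spends at least one, as the types agree on the presence of increments.  Hence c is answered
  at cost at most (K + 2) B.
\<close>

lemma offs_0 [simp]: "offs R 0 = 0"
  by (simp add: offs_def)

lemma offs_Suc: "offs R (Suc k) = offs R k + length (R k)"
  by (simp add: offs_def)

lemma offs_mono: "k \<le> k' \<Longrightarrow> offs R k \<le> offs R k'"
  by (induction k' rule: dec_induct) (auto simp: offs_Suc)

lemma le_offs:
  assumes "\<And>k. R k \<noteq> []"
  shows "k \<le> offs R k"
proof (induction k)
  case (Suc k)
  have "length (R k) > 0" using assms[of k] by simp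
  with Suc.IH show ?case unfolding offs_Suc by linarith
qed simp

lemma le_of_offs_le_block:
  assumes "i < length (R k)" "offs R k' \<le> offs R k + i"
  shows "k' \<le> k"
proof (rule ccontr)
  assume "\<not> k' \<le> k"
  then have "offs R (Suc k) \<le> offs R k'" by (intro offs_mono) simp
  with assms show False by (simp add: offs_Suc)
qed

lemma concat_inf_offs_nth:
  assumes "i < length (R k)"
  shows "concat_inf R (offs R k + i) = R k ! i"
proof -
  have "(GREATEST k'. offs R k' \<le> offs R k + i) = k"
    using le_of_offs_le_block[where R = R, OF assms] by (intro Greatest_equality) auto
  then show ?thesis by (simp add: concat_inf_def Let_def)
qed

lemma concat_inf_block_decomp:
  assumes "\<And>k. R k \<noteq> []"
  obtains k i where "i < length (R k)" "n = offs R k + i"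
proof -
  have "n < offs R (Suc n)" using le_offs[of R "Suc n", OF assms] by simp
  then obtain k where "\<forall>k'\<le>k. \<not> n < offs R k'" "n < offs R (Suc k)"
    using ex_least_nat_less[of "\<lambda>k. n < offs R k" "Suc n"] by auto
  then have "offs R k \<le> n" "n < offs R k + length (R k)" by (auto simp: offs_Suc)
  then show ?thesis by (intro that[of "n - offs R k" k]) auto
qed

lemma concat_inf_last_hd:
  assumes "R k \<noteq> []" "R (Suc k) \<noteq> []"
  shows "concat_inf R (offs R k + (length (R k) - 1)) = last (R k)"
    and "concat_inf R (Suc (offs R k + (length (R k) - 1))) = hd (R (Suc k))"
proof -
  show "concat_inf R (offs R k + (length (R k) - 1)) = last (R k)"
    using concat_inf_offs_nth[of "length (R k) - 1" R k] assms(1) by (simp add: last_conv_nth)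
  have "Suc (offs R k + (length (R k) - 1)) = offs R (Suc k) + 0"
    using assms(1) by (simp add: offs_Suc)
  then show "concat_inf R (Suc (offs R k + (length (R k) - 1))) = hd (R (Suc k))"
    using concat_inf_offs_nth[of 0 R "Suc k"] assms(2) by (simp add: hd_conv_nth)
qed

lemma inf_run_concat_inf_iff:
  assumes fin: "\<And>k. fin_run \<delta> (R k)"
  shows "inf_run \<delta> (concat_inf R) \<longleftrightarrow> (\<forall>k. tgt (last (R k)) = src (hd (R (Suc k))))"
proof -
  have ne: "\<And>k. R k \<noteq> []" using fin by (simp add: fin_run_def)
  have "is_trans \<delta> (concat_inf R n) \<and> tgt (concat_inf R n) = src (concat_inf R (Suc n))"
    if link: "\<forall>k. tgt (last (R k)) = src (hd (R (Suc k)))" for n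
  proof -
    obtain k i where ki: "i < length (R k)" "n = offs R k + i"
      using concat_inf_block_decomp[OF ne] .
    then have rn: "concat_inf R n = R k ! i" by (simp add: concat_inf_offs_nth)
    show ?thesis
    proof (cases "Suc i < length (R k)")
      case True
      then show ?thesis using fin[of k] ki rn concat_inf_offs_nth[of "Suc i" R k]
        by (simp add: fin_run_def)
    next
      case False
      then have "i = length (R k) - 1" using ki(1) by simp
      then show ?thesis using fin[of k] ki link concat_inf_last_hd[of R k, OF ne ne]
        by (simp add: fin_run_def last_conv_nth ne)
    qed
  qed
  moreover have "tgt (last (R k)) = src (hd (R (Suc k)))" if "inf_run \<delta> (concat_inf R)" for k
    using that concat_inf_last_hd[of R k, OF ne ne] unfolding inf_run_def by metis
  ultimately show ?thesis unfolding inf_run_def by blast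
qed

lemma src_concat_inf_offs:
  assumes fin: "\<And>k. fin_run \<delta> (R k)" and run: "inf_run \<delta> (concat_inf R)"
    and i: "i \<le> length (R k)"
  shows "src (concat_inf R (offs R k + i)) = fstates (R k) ! i"
proof (cases "i < length (R k)")
  case True
  then show ?thesis by (simp add: concat_inf_offs_nth fstates_def nth_append)
next
  case False
  have ne: "\<And>k. R k \<noteq> []" using fin by (simp add: fin_run_def)
  have i: "i = length (R k)" and "offs R k + i = Suc (offs R k + (length (R k) - 1))"
    using False i ne[of k] by simp_all
  then have "src (concat_inf R (offs R k + i)) = tgt (last (R k))"
    using run concat_inf_last_hd[of R k, OF ne ne] unfolding inf_run_def by metis
  then show ?thesis using i by (simp add: fstates_def nth_append)
qed

lemma finite_incr_positions: "finite {j. a \<le> j \<and> j < (b::nat) \<and> is_incr Cst (r j)}"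
  by (rule finite_subset[of _ "{..<b}"]) auto

lemma cost_inf_split:
  assumes "a \<le> c" "c \<le> b"
  shows "cost_inf Cst r a b = cost_inf Cst r a c + cost_inf Cst r c b"
proof -
  have "{j. a \<le> j \<and> j < b \<and> is_incr Cst (r j)} =
        {j. a \<le> j \<and> j < c \<and> is_incr Cst (r j)} \<union> {j. c \<le> j \<and> j < b \<and> is_incr Cst (r j)}"
    using assms by auto
  then show ?thesis
    unfolding cost_inf_def by (simp add: card_Un_disjoint finite_incr_positions disjoint_iff)
qed

lemma cost_inf_le_diff: "cost_inf Cst r a b \<le> b - a"
proof -
  have "cost_inf Cst r a b \<le> card {a..<b}"
    unfolding cost_inf_def by (rule card_mono) auto
  then show ?thesis by simp
qed

lemma cost_inf_mono: "a' \<le> a \<Longrightarrow> b \<le> b' \<Longrightarrow> cost_inf Cst r a b \<le> cost_inf Cst r a' b'"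
  unfolding cost_inf_def by (rule card_mono[OF finite_incr_positions]) auto

lemma cost_inf_offs_sum:
  assumes "a \<le> b"
  shows "cost_inf Cst r (offs R a) (offs R b) = (\<Sum>k = a..<b. cost_inf Cst r (offs R k) (offs R (Suc k)))"
  using assms
proof (induction b rule: dec_induct)
  case base
  then show ?case by (simp add: cost_inf_def)
next
  case (step b)
  have "cost_inf Cst r (offs R a) (offs R (Suc b)) =
        cost_inf Cst r (offs R a) (offs R b) + cost_inf Cst r (offs R b) (offs R (Suc b))"
    using step.hyps by (intro cost_inf_split offs_mono) simp_all
  with step show ?case by simp
qed

lemma cost_inf_block_eq_0_iff:
  "cost_inf Cst (concat_inf R) (offs R k) (offs R (Suc k)) = 0 \<longleftrightarrow> (\<forall>t\<in>set (R k). \<not> is_incr Cst t)"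
proof -
  have "(\<exists>j. offs R k \<le> j \<and> j < offs R (Suc k) \<and> is_incr Cst (concat_inf R j)) \<longleftrightarrow>
        (\<exists>i<length (R k). is_incr Cst (R k ! i))"
  proof
    assume "\<exists>j. offs R k \<le> j \<and> j < offs R (Suc k) \<and> is_incr Cst (concat_inf R j)"
    then obtain j where j: "offs R k \<le> j" "j < offs R (Suc k)" "is_incr Cst (concat_inf R j)"
      by blast
    then have "j - offs R k < length (R k)" "j = offs R k + (j - offs R k)"
      by (simp_all add: offs_Suc)
    then show "\<exists>i<length (R k). is_incr Cst (R k ! i)"
      using j(3) by (metis concat_inf_offs_nth)
  next
    assume "\<exists>i<length (R k). is_incr Cst (R k ! i)"
    then obtain i where "i < length (R k)" "is_incr Cst (R k ! i)" by blast
    then show "\<exists>j. offs R k \<le> j \<and> j < offs R (Suc k) \<and> is_incr Cst (concat_inf R j)"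
      by (intro exI[of _ "offs R k + i"]) (simp add: concat_inf_offs_nth offs_Suc)
  qed
  also have "\<dots> \<longleftrightarrow> (\<exists>t\<in>set (R k). is_incr Cst t)"
    by (metis in_set_conv_nth)
  finally show ?thesis
    unfolding cost_inf_def card_eq_0_iff using finite_incr_positions by blast
qed

lemma cost_inf_block_le_length: "cost_inf Cst r (offs R k) (offs R (Suc k)) \<le> length (R k)"
  using cost_inf_le_diff[of Cst r "offs R k" "offs R (Suc k)"] by (simp add: offs_Suc)

lemma Cor_le_enatI:
  assumes "odd (\<Omega> (src (r n)))" "n < n'" "\<Omega> (src (r n')) \<in> Ans \<Omega> (\<Omega> (src (r n)))"
    and "cost_inf Cst r n n' \<le> M"
  shows "Cor \<Omega> Cst r n \<le> enat M"
proof -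
  have "Cor \<Omega> Cst r n \<le> enat (cost_inf Cst r n n')"
    unfolding Cor_def using assms by (auto intro!: INF_lower2[of n'])
  also have "\<dots> \<le> enat M" using assms(4) by simp
  finally show ?thesis .
qed

lemma Cor_le_enatE:
  assumes "odd (\<Omega> (src (r n)))" "Cor \<Omega> Cst r n \<le> enat K"
  obtains n' where "n < n'" "\<Omega> (src (r n')) \<in> Ans \<Omega> (\<Omega> (src (r n)))" "cost_inf Cst r n n' \<le> K"
proof (rule ccontr)
  assume "\<not> thesis"
  with that have "K < cost_inf Cst r n n'"
    if "n < n'" "\<Omega> (src (r n')) \<in> Ans \<Omega> (\<Omega> (src (r n)))" for n'
    using that by (meson not_le)
  then have "enat (Suc K) \<le> Cor \<Omega> Cst r n"
    unfolding Cor_def using assms(1) by (auto intro!: INF_greatest simp: Suc_le_eq)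
  with assms(2) show False using order_trans[of "enat (Suc K)"] by fastforce
qed

lemma limsup_less_infinity_iff:
  fixes f :: "nat \<Rightarrow> enat"
  shows "limsup f < \<infinity> \<longleftrightarrow> (\<exists>K N. \<forall>n\<ge>N. f n \<le> enat K)"
proof
  assume "limsup f < \<infinity>"
  then have "(INF n. SUP m\<in>{n..}. f m) < \<infinity>" by (simp add: limsup_INF_SUP)
  then obtain N where "(SUP m\<in>{N..}. f m) < \<infinity>" unfolding INF_less_iff by blast
  then obtain K where "(SUP m\<in>{N..}. f m) = enat K"
    using less_infinityE by blast
  then have "\<forall>n\<ge>N. f n \<le> enat K" by (metis SUP_upper atLeast_iff)
  then show "\<exists>K N. \<forall>n\<ge>N. f n \<le> enat K" by blast
next
  assume "\<exists>K N. \<forall>n\<ge>N. f n \<le> enat K"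
  then obtain K N where "\<forall>n\<ge>N. f n \<le> enat K" by blast
  then have "limsup f \<le> enat K" by (intro Limsup_bounded) (auto simp: eventually_sequentially)
  then show "limsup f < \<infinity>" using enat_ord_simps(4) order.strict_trans1 by blast
qed

definition even_colours :: "('q \<Rightarrow> nat) \<Rightarrow> ('q,'a) trans list \<Rightarrow> nat set" where
  "even_colours \<Omega> \<rho> = {\<Omega> (fstates \<rho> ! j) | j. j \<le> length \<rho> \<and> even (\<Omega> (fstates \<rho> ! j))}"

definition unanswered_colours :: "('q \<Rightarrow> nat) \<Rightarrow> ('q,'a) trans list \<Rightarrow> nat set" where
  "unanswered_colours \<Omega> \<rho> = {\<Omega> (fstates \<rho> ! j) | j. j \<le> length \<rho> \<and> odd (\<Omega> (fstates \<rho> ! j))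
     \<and> (\<forall>j'. j < j' \<and> j' \<le> length \<rho> \<longrightarrow> \<Omega> (fstates \<rho> ! j') \<notin> Ans \<Omega> (\<Omega> (fstates \<rho> ! j)))}"

lemma run_type_eqD:
  assumes "run_type \<Omega> Cst \<rho>1 = run_type \<Omega> Cst \<rho>2"
  shows "src (hd \<rho>1) = src (hd \<rho>2)" "tgt (last \<rho>1) = tgt (last \<rho>2)"
    and "max_opt (even_colours \<Omega> \<rho>1) = max_opt (even_colours \<Omega> \<rho>2)"
    and "max_opt (unanswered_colours \<Omega> \<rho>1) = max_opt (unanswered_colours \<Omega> \<rho>2)"
    and "(\<exists>t\<in>set \<rho>1. is_incr Cst t) \<longleftrightarrow> (\<exists>t\<in>set \<rho>2. is_incr Cst t)"
  using assms unfolding run_type_def Let_def even_colours_def unanswered_colours_def by simp_all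

lemma finite_even_colours: "finite (even_colours \<Omega> \<rho>)"
  unfolding even_colours_def by (rule finite_image_set) simp

lemma finite_unanswered_colours: "finite (unanswered_colours \<Omega> \<rho>)"
  unfolding unanswered_colours_def by (rule finite_image_set) simp

lemma max_opt_eq_imp_ex_ge:
  assumes "finite S" "finite T" "max_opt S = max_opt T" "x \<in> S"
  shows "\<exists>y\<in>T. x \<le> y"
proof -
  have "T \<noteq> {}" "Max T = Max S" using assms by (auto simp: max_opt_def split: if_splits)
  with assms show ?thesis by (metis Max_ge Max_in)
qed

lemma answer_beyond_unanswered_block:
  assumes fin: "\<And>k. fin_run \<delta> (R k)" and run: "inf_run \<delta> (concat_inf R)"
    and "i \<le> length (R k)"
    and unanswered: "\<And>i'. i < i' \<Longrightarrow> i' \<le> length (R k) \<Longrightarrow> \<Omega> (fstates (R k) ! i') \<notin> A"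
    and "offs R k + i < n" "\<Omega> (src (concat_inf R n)) \<in> A"
  shows "offs R (Suc k) < n"
proof (rule ccontr)
  assume "\<not> offs R (Suc k) < n"
  then have "i < n - offs R k" "n - offs R k \<le> length (R k)" "n = offs R k + (n - offs R k)"
    using assms(5) by (simp_all add: offs_Suc)
  with unanswered assms(6) show False by (metis src_concat_inf_offs[OF fin run])
qed

lemma unanswered_answered_in_later_block:
  assumes fin: "\<And>k. fin_run \<delta> (R k)" and run: "inf_run \<delta> (concat_inf R)"
    and Cor: "Cor \<Omega> Cst (concat_inf R) (offs R j + i) \<le> enat K"
    and i: "i \<le> length (R j)" and odd: "odd (\<Omega> (fstates (R j) ! i))"
    and unanswered: "\<And>i'. i < i' \<Longrightarrow> i' \<le> length (R j) \<Longrightarrow>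
      \<Omega> (fstates (R j) ! i') \<notin> Ans \<Omega> (\<Omega> (fstates (R j) ! i))"
  obtains j' i' where "Suc j \<le> j'" "i' \<le> length (R j')"
    "\<Omega> (fstates (R j') ! i') \<in> Ans \<Omega> (\<Omega> (fstates (R j) ! i))"
    "cost_inf Cst (concat_inf R) (offs R (Suc j)) (offs R j') \<le> K"
proof -
  have ne: "\<And>k. R k \<noteq> []" using fin by (simp add: fin_run_def)
  have src: "src (concat_inf R (offs R j + i)) = fstates (R j) ! i"
    by (rule src_concat_inf_offs[OF fin run i])
  obtain n where n: "offs R j + i < n" "\<Omega> (src (concat_inf R n)) \<in> Ans \<Omega> (\<Omega> (fstates (R j) ! i))"
      "cost_inf Cst (concat_inf R) (offs R j + i) n \<le> K"
    using Cor_le_enatE[of \<Omega> "concat_inf R", OF _ Cor] odd src by metis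
  obtain j' i' where ji': "i' < length (R j')" "n = offs R j' + i'"
    using concat_inf_block_decomp[OF ne] .
  have "offs R (Suc j) < n"
    using answer_beyond_unanswered_block[OF fin run i unanswered n(1,2)] .
  then have "offs R (Suc j) \<le> offs R j' + i'" using ji'(2) by simp
  then have "Suc j \<le> j'" by (rule le_of_offs_le_block[of i' R j', OF ji'(1)])
  moreover have "\<Omega> (fstates (R j') ! i') \<in> Ans \<Omega> (\<Omega> (fstates (R j) ! i))"
    using n(2) ji' src_concat_inf_offs[OF fin run, of i' j'] by simp
  moreover have "cost_inf Cst (concat_inf R) (offs R (Suc j)) (offs R j')
      \<le> cost_inf Cst (concat_inf R) (offs R j + i) n"
    using i ji'(2) by (intro cost_inf_mono) (simp_all add: offs_Suc)
  ultimately show thesis using that ji'(1) n(3) by (meson le_trans less_imp_le)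
qed

locale same_type_blocks =
  fixes \<delta> :: "'q \<Rightarrow> 'a \<Rightarrow> 'q" and \<Omega> :: "'q \<Rightarrow> nat" and Cst :: "'q \<Rightarrow> 'a \<Rightarrow> bool"
    and R1 R2 :: "nat \<Rightarrow> ('q,'a) trans list" and B :: nat
  assumes fin_run1: "\<And>k. fin_run \<delta> (R1 k)" and fin_run2: "\<And>k. fin_run \<delta> (R2 k)"
    and same_type: "\<And>k. run_type \<Omega> Cst (R1 k) = run_type \<Omega> Cst (R2 k)"
    and length_le1: "\<And>k. length (R1 k) \<le> B" and length_le2: "\<And>k. length (R2 k) \<le> B"
begin

lemma blocks_nonempty: "R1 k \<noteq> []" "R2 k \<noteq> []"
  using fin_run1 fin_run2 by (simp_all add: fin_run_def)

lemma inf_run_transfer: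
  assumes "inf_run \<delta> (concat_inf R1)"
  shows "inf_run \<delta> (concat_inf R2)"
  using assms run_type_eqD(1,2)[OF same_type]
  by (simp add: inf_run_concat_inf_iff[OF fin_run1] inf_run_concat_inf_iff[OF fin_run2])

lemma even_colour_transfer:
  assumes "i \<le> length (R1 k)" "even (\<Omega> (fstates (R1 k) ! i))"
  obtains i2 where "i2 \<le> length (R2 k)" "even (\<Omega> (fstates (R2 k) ! i2))"
    "\<Omega> (fstates (R1 k) ! i) \<le> \<Omega> (fstates (R2 k) ! i2)"
proof -
  have "\<Omega> (fstates (R1 k) ! i) \<in> even_colours \<Omega> (R1 k)"
    using assms unfolding even_colours_def by blast
  then obtain e where "e \<in> even_colours \<Omega> (R2 k)" "\<Omega> (fstates (R1 k) ! i) \<le> e"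
    using max_opt_eq_imp_ex_ge[OF finite_even_colours finite_even_colours
        run_type_eqD(3)[OF same_type]] by blast
  then show thesis using that unfolding even_colours_def by blast
qed

lemma unanswered_colour_transfer:
  assumes "i \<le> length (R2 k)" "odd (\<Omega> (fstates (R2 k) ! i))"
    and "\<And>i'. i < i' \<Longrightarrow> i' \<le> length (R2 k) \<Longrightarrow>
      \<Omega> (fstates (R2 k) ! i') \<notin> Ans \<Omega> (\<Omega> (fstates (R2 k) ! i))"
  obtains i1 where "i1 \<le> length (R1 k)" "odd (\<Omega> (fstates (R1 k) ! i1))"
    "\<Omega> (fstates (R2 k) ! i) \<le> \<Omega> (fstates (R1 k) ! i1)"
    "\<And>i'. i1 < i' \<Longrightarrow> i' \<le> length (R1 k) \<Longrightarrow>
      \<Omega> (fstates (R1 k) ! i') \<notin> Ans \<Omega> (\<Omega> (fstates (R1 k) ! i1))"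
proof -
  have "\<Omega> (fstates (R2 k) ! i) \<in> unanswered_colours \<Omega> (R2 k)"
    using assms unfolding unanswered_colours_def by blast
  then obtain c where "c \<in> unanswered_colours \<Omega> (R1 k)" "\<Omega> (fstates (R2 k) ! i) \<le> c"
    using max_opt_eq_imp_ex_ge[OF finite_unanswered_colours finite_unanswered_colours
        run_type_eqD(4)[OF same_type[symmetric]]] by blast
  then show thesis using that unfolding unanswered_colours_def by blast
qed

lemma cost_inf_offs_le_mult:
  assumes "a \<le> b"
  shows "cost_inf Cst (concat_inf R2) (offs R2 a) (offs R2 b)
    \<le> B * cost_inf Cst (concat_inf R1) (offs R1 a) (offs R1 b)"
proof -
  have block: "cost_inf Cst (concat_inf R2) (offs R2 k) (offs R2 (Suc k))
      \<le> B * cost_inf Cst (concat_inf R1) (offs R1 k) (offs R1 (Suc k))" for k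
  proof (cases "cost_inf Cst (concat_inf R1) (offs R1 k) (offs R1 (Suc k)) = 0")
    case True
    then have "cost_inf Cst (concat_inf R2) (offs R2 k) (offs R2 (Suc k)) = 0"
      using run_type_eqD(5)[OF same_type[of k]] by (simp add: cost_inf_block_eq_0_iff)
    then show ?thesis by simp
  next
    case False
    have "cost_inf Cst (concat_inf R2) (offs R2 k) (offs R2 (Suc k)) \<le> B"
      using cost_inf_block_le_length length_le2 order_trans by blast
    with False show ?thesis by (simp add: le_trans[OF _ mult_le_mono2, of _ B 1])
  qed
  show ?thesis
    using sum_mono[where K = "{a..<b}", OF block]
    by (simp add: cost_inf_offs_sum[OF assms] sum_distrib_left)
qed

lemma cost_inf_across_blocks_le:
  assumes "Suc j \<le> j'" "i < length (R2 j)" "i2 \<le> length (R2 j')"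
  shows "cost_inf Cst (concat_inf R2) (offs R2 j + i) (offs R2 j' + i2)
    \<le> B + B * cost_inf Cst (concat_inf R1) (offs R1 (Suc j)) (offs R1 j') + B"
proof -
  let ?c = "cost_inf Cst (concat_inf R2)"
  have first: "offs R2 j + i \<le> offs R2 (Suc j)" and middle: "offs R2 (Suc j) \<le> offs R2 j'"
    using assms offs_mono[of "Suc j" j' R2] by (simp_all add: offs_Suc)
  then have "?c (offs R2 j + i) (offs R2 j' + i2)
      = ?c (offs R2 j + i) (offs R2 (Suc j)) + ?c (offs R2 (Suc j)) (offs R2 j')
        + ?c (offs R2 j') (offs R2 j' + i2)"
    using cost_inf_split[OF first, of "offs R2 j' + i2" Cst "concat_inf R2"]
      cost_inf_split[OF middle, of "offs R2 j' + i2" Cst "concat_inf R2"] by linarith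
  moreover have "?c (offs R2 j + i) (offs R2 (Suc j)) \<le> B"
    using cost_inf_le_diff[of Cst "concat_inf R2" "offs R2 j + i" "offs R2 (Suc j)"] length_le2[of j]
    unfolding offs_Suc by linarith
  moreover have "?c (offs R2 j') (offs R2 j' + i2) \<le> B"
    using cost_inf_le_diff[of Cst "concat_inf R2" "offs R2 j'" "offs R2 j' + i2"] length_le2[of j'] assms(3)
    by linarith
  moreover have "?c (offs R2 (Suc j)) (offs R2 j')
      \<le> B * cost_inf Cst (concat_inf R1) (offs R1 (Suc j)) (offs R1 j')"
    using assms(1) by (simp add: cost_inf_offs_le_mult)
  ultimately show ?thesis by linarith
qed

lemma Cor_le_unanswered_in_block:
  assumes run1: "inf_run \<delta> (concat_inf R1)"
    and bnd: "\<And>n. N \<le> n \<Longrightarrow> Cor \<Omega> Cst (concat_inf R1) n \<le> enat K"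
    and "N \<le> j" and i: "i < length (R2 j)" and odd: "odd (\<Omega> (fstates (R2 j) ! i))"
    and unanswered: "\<And>i'. i < i' \<Longrightarrow> i' \<le> length (R2 j) \<Longrightarrow>
      \<Omega> (fstates (R2 j) ! i') \<notin> Ans \<Omega> (\<Omega> (fstates (R2 j) ! i))"
  shows "Cor \<Omega> Cst (concat_inf R2) (offs R2 j + i) \<le> enat ((K + 2) * B)"
proof -
  have run2: "inf_run \<delta> (concat_inf R2)" using run1 by (rule inf_run_transfer)
  obtain i1 where i1: "i1 \<le> length (R1 j)" "odd (\<Omega> (fstates (R1 j) ! i1))"
      "\<Omega> (fstates (R2 j) ! i) \<le> \<Omega> (fstates (R1 j) ! i1)"
      "\<And>i'. i1 < i' \<Longrightarrow> i' \<le> length (R1 j) \<Longrightarrow>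
        \<Omega> (fstates (R1 j) ! i') \<notin> Ans \<Omega> (\<Omega> (fstates (R1 j) ! i1))"
    using unanswered_colour_transfer[OF less_imp_le[OF i] odd unanswered] by blast
  have "N \<le> offs R1 j + i1"
    using \<open>N \<le> j\<close> le_offs[of R1 j, OF blocks_nonempty(1)] by linarith
  then obtain j' i' where ji': "Suc j \<le> j'" "i' \<le> length (R1 j')"
      "\<Omega> (fstates (R1 j') ! i') \<in> Ans \<Omega> (\<Omega> (fstates (R1 j) ! i1))"
      "cost_inf Cst (concat_inf R1) (offs R1 (Suc j)) (offs R1 j') \<le> K"
    using unanswered_answered_in_later_block[OF fin_run1 run1 bnd i1(1,2,4)] by blast
  have "even (\<Omega> (fstates (R1 j') ! i'))" using ji'(3) by (simp add: Ans_def)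
  then obtain i2 where i2: "i2 \<le> length (R2 j')" "even (\<Omega> (fstates (R2 j') ! i2))"
      "\<Omega> (fstates (R1 j') ! i') \<le> \<Omega> (fstates (R2 j') ! i2)"
    using even_colour_transfer[OF ji'(2)] by blast
  have ans: "\<Omega> (src (concat_inf R2 (offs R2 j' + i2)))
      \<in> Ans \<Omega> (\<Omega> (src (concat_inf R2 (offs R2 j + i))))"
    using ji'(3) i1(3) i2 i src_concat_inf_offs[OF fin_run2 run2] by (auto simp: Ans_def)
  have "B * cost_inf Cst (concat_inf R1) (offs R1 (Suc j)) (offs R1 j') \<le> B * K"
    using ji'(4) by simp
  moreover have "(K + 2) * B = B + B * K + B" by (simp add: algebra_simps)
  ultimately have cost:
      "cost_inf Cst (concat_inf R2) (offs R2 j + i) (offs R2 j' + i2) \<le> (K + 2) * B"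
    using cost_inf_across_blocks_le[OF ji'(1) i i2(1)] by linarith
  have "offs R2 j + i < offs R2 j' + i2"
    using ji'(1) i offs_mono[of "Suc j" j' R2] by (simp add: offs_Suc)
  with ans cost show ?thesis
    using odd src_concat_inf_offs[OF fin_run2 run2, of i j] i by (intro Cor_le_enatI) simp_all
qed

lemma Cor_concat_inf_le:
  assumes run1: "inf_run \<delta> (concat_inf R1)"
    and bnd: "\<And>n. N \<le> n \<Longrightarrow> Cor \<Omega> Cst (concat_inf R1) n \<le> enat K"
    and "offs R2 N \<le> n"
  shows "Cor \<Omega> Cst (concat_inf R2) n \<le> enat ((K + 2) * B)"
proof -
  have run2: "inf_run \<delta> (concat_inf R2)" using run1 by (rule inf_run_transfer)
  obtain j i where ji: "i < length (R2 j)" "n = offs R2 j + i"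
    using concat_inf_block_decomp[OF blocks_nonempty(2)] .
  have "N \<le> j" using le_of_offs_le_block[of i R2 j N] ji assms(3) by simp
  have src: "src (concat_inf R2 n) = fstates (R2 j) ! i"
    using src_concat_inf_offs[OF fin_run2 run2, of i j] ji by simp
  consider (even) "even (\<Omega> (fstates (R2 j) ! i))"
    | (answered) i' where "odd (\<Omega> (fstates (R2 j) ! i))" "i < i'" "i' \<le> length (R2 j)"
        "\<Omega> (fstates (R2 j) ! i') \<in> Ans \<Omega> (\<Omega> (fstates (R2 j) ! i))"
    | (unanswered) "odd (\<Omega> (fstates (R2 j) ! i))"
        "\<And>i'. i < i' \<Longrightarrow> i' \<le> length (R2 j) \<Longrightarrow>
          \<Omega> (fstates (R2 j) ! i') \<notin> Ans \<Omega> (\<Omega> (fstates (R2 j) ! i))"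
    by blast
  then show ?thesis
  proof cases
    case even
    then show ?thesis by (simp add: Cor_def src)
  next
    case answered
    have "cost_inf Cst (concat_inf R2) n (offs R2 j + i') \<le> B"
      using cost_inf_le_diff[of Cst "concat_inf R2" n "offs R2 j + i'"] length_le2[of j]
        answered(3) ji(2) by linarith
    then show ?thesis
      using answered ji src src_concat_inf_offs[OF fin_run2 run2 answered(3)]
      by (intro Cor_le_enatI[where n' = "offs R2 j + i'"]) (auto intro: le_trans)
  next
    case unanswered
    then show ?thesis
      using Cor_le_unanswered_in_block[OF run1 bnd \<open>N \<le> j\<close> ji(1)] ji(2) by simp
  qed
qed

lemma accepting_run_transfer:
  assumes "accepting_run \<delta> \<Omega> Cst (concat_inf R1)"
  shows "accepting_run \<delta> \<Omega> Cst (concat_inf R2)"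
proof -
  have run1: "inf_run \<delta> (concat_inf R1)" using assms by (simp add: accepting_run_def)
  have "limsup (Cor \<Omega> Cst (concat_inf R1)) < \<infinity>" using assms by (simp add: accepting_run_def)
  then obtain K N where "\<forall>n\<ge>N. Cor \<Omega> Cst (concat_inf R1) n \<le> enat K"
    unfolding limsup_less_infinity_iff by blast
  then have "\<forall>n\<ge>offs R2 N. Cor \<Omega> Cst (concat_inf R2) n \<le> enat ((K + 2) * B)"
    using Cor_concat_inf_le[OF run1, of N K] by blast
  then have "limsup (Cor \<Omega> Cst (concat_inf R2)) < \<infinity>"
    unfolding limsup_less_infinity_iff by blast
  then show ?thesis using inf_run_transfer[OF run1] by (simp add: accepting_run_def)
qed

end

theorem corollary1:
  fixes \<delta> :: "'q::finite \<Rightarrow> 'a::finite \<Rightarrow> 'q"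
    and \<Omega> :: "'q \<Rightarrow> nat"
    and Cst :: "'q \<Rightarrow> 'a \<Rightarrow> bool"
    and R1 R2 :: "nat \<Rightarrow> ('q,'a) trans list"
  assumes "\<exists>q. even (\<Omega> q)" and "\<exists>q. odd (\<Omega> q)"
    and "\<And>j. fin_run \<delta> (R1 j)" and "\<And>j. fin_run \<delta> (R2 j)"
    and "\<And>j. run_type \<Omega> Cst (R1 j) = run_type \<Omega> Cst (R2 j)"
    and "\<exists>B. \<forall>j. length (R1 j) \<le> B" and "\<exists>B. \<forall>j. length (R2 j) \<le> B"
  shows "accepting_run \<delta> \<Omega> Cst (concat_inf R1) \<longleftrightarrow> accepting_run \<delta> \<Omega> Cst (concat_inf R2)"
proof -
  obtain B1 B2 where "\<forall>j. length (R1 j) \<le> B1" "\<forall>j. length (R2 j) \<le> B2"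
    using assms(6,7) by blast
  then have "\<And>j. length (R1 j) \<le> max B1 B2" "\<And>j. length (R2 j) \<le> max B1 B2"
    by (simp_all add: le_max_iff_disj)
  then interpret forward: same_type_blocks \<delta> \<Omega> Cst R1 R2 "max B1 B2"
    + backward: same_type_blocks \<delta> \<Omega> Cst R2 R1 "max B1 B2"
    using assms(3-5) by unfold_locales simp_all
  show ?thesis
    using forward.accepting_run_transfer backward.accepting_run_transfer by blast
qed

end
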